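(* Let $V\in(\mathbb{R}\cup\{-\infty\})^{n\times p}$ have no row and no column identically equal to $-\infty$, and let $T$ be the operator $$T_i(x)=\inf_{k\in[p],\,V_{ik}\neq-\infty}\Big[-V_{ik}+\max_{j\in[n],\,j\neq i}(V_{jk}+x_j)\Big],\qquad i\in[n].$$ The following assertions are equivalent: (1) the inner radius of $\operatorname{Col}(V)$ is $+\infty$; (2) no part of $(\mathbb{R}\cup\{-\infty\})^n$ is left invariant by $T$; (3) $T^n(0)$ is the vector identically equal to $-\infty$; (4) $\rho(T)=-\infty$.
   Context: $\mathbb{R}_{\max}=\mathbb{R}\cup\{-\infty\}$, with $-\infty+c=-\infty$ and $\max\emptyset=-\infty$. $\operatorname{Col}(V)=\{Vx:x\in\mathbb{R}_{\max}^p\}$ with $(Vx)_i=\max_k(V_{ik}+x_k)$. Hilbert's projective metric: $d(x,y)=\inf\{\lambda-\mu:\lambda,\mu\in\mathbb{R},\ \mu+y_i\le x_i\le\lambda+y_i\ \forall i\}$; for $a\in\mathbb{R}^n$, $B(a,r)=\{x:d(a,x)\le r\}$. The inner radius of $\operatorname{Col}(V)$ is the supremum of the radii $r$ of balls $B(a,r)$ with $a\in\mathbb{R}^n$ included in $\operatorname{Col}(V)$. For a nonempty $I\subset[n]$, the part $P_I$ is the set of vectors of $\mathbb{R}_{\max}^n$ whose support $\{i: x_i\neq-\infty\}$ equals $I$; $P_I$ is left invariant by $T$ if $T(P_I)\subset P_I$. $T^n$ is the $n$-th iterate. $\rho(T)=\sup\{\lambda\in\mathbb{R}\cup\{-\infty\}:\exists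 u\not\equiv-\infty,\ T(u)=\lambda+u\}$. *)

theory Defs
  imports "HOL-Analysis.Analysis"
begin

text \<open>Max-plus semiring R_max = R \<union> {-\<infinity>} is modelled inside ereal; a vector of
  R_max^n is a function 'n \<Rightarrow> ereal never taking the value +\<infinity>.\<close>

definition rmax_vec :: "('a \<Rightarrow> ereal) \<Rightarrow> bool" where
  "rmax_vec x \<longleftrightarrow> (\<forall>i. x i \<noteq> \<infinity>)"

definition col :: "('n \<Rightarrow> 'p::finite \<Rightarrow> ereal) \<Rightarrow> ('n \<Rightarrow> ereal) set" where
  "col V = {(\<lambda>i. SUP k. V i k + x k) | x. rmax_vec x}"

text \<open>Hilbert's projective metric (value +\<infinity> when the defining set is empty).\<close>
definition hilbert_d :: "('n \<Rightarrow> ereal) \<Rightarrow> ('n \<Rightarrow> ereal) \<Rightarrow> ereal" where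
  "hilbert_d x y = Inf {ereal (l - m) | l m. \<forall>i. ereal m + y i \<le> x i \<and> x i \<le> ereal l + y i}"

definition hball :: "('n \<Rightarrow> real) \<Rightarrow> real \<Rightarrow> ('n \<Rightarrow> ereal) set" where
  "hball a r = {x. rmax_vec x \<and> hilbert_d (\<lambda>i. ereal (a i)) x \<le> ereal r}"

definition inner_radius :: "('n \<Rightarrow> 'p::finite \<Rightarrow> ereal) \<Rightarrow> ereal" where
  "inner_radius V = Sup {ereal r | r a. 0 \<le> r \<and> hball a r \<subseteq> col V}"

text \<open>The operator T_i(x) = inf_{k, V_ik \<noteq> -\<infinity>} [ -V_ik + max_{j \<noteq> i} (V_jk + x_j) ],
  with max of the empty set = -\<infinity>.\<close>
definition opT :: "('n \<Rightarrow> 'p \<Rightarrow> ereal) \<Rightarrow> ('n \<Rightarrow> ereal) \<Rightarrow> ('n \<Rightarrow> ereal)" where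
  "opT V x = (\<lambda>i. INF k\<in>{k. V i k \<noteq> -\<infinity>}. - V i k + (SUP j\<in>{j. j \<noteq> i}. V j k + x j))"

definition part :: "'n set \<Rightarrow> ('n \<Rightarrow> ereal) set" where
  "part I = {x. rmax_vec x \<and> {i. x i \<noteq> -\<infinity>} = I}"

definition rho :: "(('n \<Rightarrow> ereal) \<Rightarrow> ('n \<Rightarrow> ereal)) \<Rightarrow> ereal" where
  "rho T = Sup {c. c \<noteq> \<infinity> \<and> (\<exists>u. rmax_vec u \<and> u \<noteq> (\<lambda>_. -\<infinity>) \<and> T u = (\<lambda>i. c + u i))}"

end

theory Submission
  imports Defs
begin

(* The support of T(x) depends only on the support of x: it is supp_map V (supp x), where
   i survives iff every column k with V i k finite meets the support of x outside row i.
   Hence a part P_I is invariant iff I is a fixed point of the monotone map supp_map V,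
   and T^n(0) has support (supp_map V)^n [n], the greatest fixed point. So (2) and (3)
   both say that this greatest fixed point is empty.

   If it is nonempty, T lowers the minimum over it of a vector by at most twice the
   largest finite entry of V, while a ball of radius r around a inside Col(V) contains
   a + r e_i, which forces T(-a)_i <= -a_i - r; so the inner radius is bounded. If it
   is empty, making z_i proportional to the step at which i leaves the iterates gives
   T(z) <= z - r for any r, and then every Hilbert ball of radius r around -z lies in
   Col(V), the preimage of y being the residuation x_k = min_j (y_j - V j k).

   The support of an eigenvector with finite eigenvalue is a nonempty fixed point.
   Conversely, on a nonempty post-fixed set, conjugating T by exp gives a continuous
   self-map of the nonnegative orthant; Brouwer's theorem applied to its normalisation
   perturbed by epsilon, and a limit epsilon -> 0, give an eigenvector whose eigenvalue
   is bounded below by the same estimate as before. *)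

lemma finite_INF_le_iff:
  fixes f :: "'a \<Rightarrow> 'b::complete_linorder"
  assumes "finite A" "A \<noteq> {}"
  shows "(INF a\<in>A. f a) \<le> e \<longleftrightarrow> (\<exists>a\<in>A. f a \<le> e)"
  using assms by (simp add: Min_Inf[symmetric] Min_le_iff)

lemma finite_le_SUP_iff:
  fixes f :: "'a \<Rightarrow> 'b::complete_linorder"
  assumes "finite A" "bot < e"
  shows "e \<le> (SUP a\<in>A. f a) \<longleftrightarrow> (\<exists>a\<in>A. e \<le> f a)"
  using assms by (cases "A = {}") (auto simp: Max_Sup[symmetric] Max_ge_iff)

lemma ereal_uminus_add_le_iff: "ereal (- v) + s \<le> e \<longleftrightarrow> s \<le> e + ereal v"
  by (cases s; cases e) auto

lemma ereal_le_uminus_add_iff: "e \<le> ereal (- v) + s \<longleftrightarrow> e + ereal v \<le> s"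
  by (cases s; cases e) auto

lemma gfp_eq_funpow_card:
  fixes F :: "'a::finite set \<Rightarrow> 'a set"
  assumes "mono F"
  shows "gfp F = (F ^^ CARD('a)) UNIV"
proof (rule gfp_Kleene_iter[OF assms])
  define A where "A k = (F ^^ k) UNIV" for k
  have dec: "A (Suc k) \<subseteq> A k" for k
    using funpow_increasing[OF _ assms, of k "Suc k"] unfolding A_def top_set_def by simp
  have A_Suc: "A (Suc k) = F (A k)" for k
    unfolding A_def by simp
  have stable: "A (Suc m) = A m" if "A (Suc k) = A k" "k \<le> m" for k m
    using that(2)
  proof (induction m rule: dec_induct)
    case (step m)
    have "A (Suc (Suc m)) = F (A (Suc m))" by (rule A_Suc)
    also have "\<dots> = F (A m)" unfolding step.IH ..
    also have "\<dots> = A (Suc m)" by (rule A_Suc[symmetric])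
    finally show ?case .
  qed (rule that(1))
  have card_bound: "card (A k) + k \<le> CARD('a)" if "\<forall>j<k. A (Suc j) \<noteq> A j" for k
    using that
  proof (induction k)
    case (Suc k)
    have "A (Suc k) \<subset> A k" using dec Suc.prems by blast
    then have "card (A (Suc k)) < card (A k)" by (simp add: psubset_card_mono)
    with Suc show ?case by simp
  qed (simp add: A_def)
  have "\<exists>k\<le>CARD('a). A (Suc k) = A k"
  proof (rule ccontr)
    assume "\<not> ?thesis"
    then have "\<forall>j<Suc CARD('a). A (Suc j) \<noteq> A j" by (simp add: less_Suc_eq_le)
    from card_bound[OF this] show False by simp
  qed
  then obtain k where k: "k \<le> CARD('a)" "A (Suc k) = A k" by blast
  from stable[OF k(2) k(1)] show "(F ^^ Suc CARD('a)) UNIV = (F ^^ CARD('a)) UNIV" unfolding A_def .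
qed

lemma gfp_neq_empty_iff:
  assumes "mono F"
  shows "gfp F \<noteq> {} \<longleftrightarrow> (\<exists>I. I \<noteq> {} \<and> F I = I)"
proof
  assume "gfp F \<noteq> {}"
  then show "\<exists>I. I \<noteq> {} \<and> F I = I" using gfp_fixpoint[OF assms] by blast
next
  assume "\<exists>I. I \<noteq> {} \<and> F I = I"
  then obtain I where "I \<noteq> {}" "I \<subseteq> F I" by auto
  then show "gfp F \<noteq> {}" using gfp_upperbound[of I F] by auto
qed

section \<open>Supports\<close>

definition supp_vec :: "('n \<Rightarrow> ereal) \<Rightarrow> 'n set" where
  "supp_vec x = {i. x i \<noteq> -\<infinity>}"

definition supp_map :: "('n \<Rightarrow> 'p \<Rightarrow> ereal) \<Rightarrow> 'n set \<Rightarrow> 'n set" where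
  "supp_map V S = {i. \<forall>k. V i k \<noteq> -\<infinity> \<longrightarrow> (\<exists>j\<in>S. j \<noteq> i \<and> V j k \<noteq> -\<infinity>)}"

lemma mono_supp_map: "mono (supp_map V)"
  unfolding supp_map_def mono_def by blast

lemma mem_part_iff: "x \<in> part I \<longleftrightarrow> rmax_vec x \<and> supp_vec x = I"
  unfolding part_def supp_vec_def by simp

lemma supp_vec_eq_empty_iff: "supp_vec x = {} \<longleftrightarrow> x = (\<lambda>_. -\<infinity>)"
  unfolding supp_vec_def fun_eq_iff by auto

locale maxplus_matrix =
  fixes V :: "'n::finite \<Rightarrow> 'p::finite \<Rightarrow> ereal"
  assumes entry_neq_pinf: "V i k \<noteq> \<infinity>"
    and row_nonempty: "\<exists>k. V i k \<noteq> -\<infinity>"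
begin

lemma finite_entry_iff: "(\<exists>v. V i k = ereal v) \<longleftrightarrow> V i k \<noteq> -\<infinity>"
  using entry_neq_pinf[of i k] by (cases "V i k") auto

lemma finite_entry: "V i k \<noteq> -\<infinity> \<Longrightarrow> \<exists>v. V i k = ereal v"
  using finite_entry_iff by blast

lemma opT_le_iff:
  "opT V x i \<le> e \<longleftrightarrow> (\<exists>k v. V i k = ereal v \<and> (\<forall>j. j \<noteq> i \<longrightarrow> V j k + x j \<le> e + ereal v))"
proof -
  have "{k. V i k \<noteq> -\<infinity>} \<noteq> {}" using row_nonempty by auto
  then have "opT V x i \<le> e \<longleftrightarrow>
      (\<exists>k. V i k \<noteq> -\<infinity> \<and> - V i k + (SUP j\<in>{j. j \<noteq> i}. V j k + x j) \<le> e)"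
    unfolding opT_def by (simp add: finite_INF_le_iff)
  also have "\<dots> \<longleftrightarrow> (\<exists>k v. V i k = ereal v \<and> (\<forall>j. j \<noteq> i \<longrightarrow> V j k + x j \<le> e + ereal v))"
  proof -
    have "V i k \<noteq> -\<infinity> \<and> - V i k + (SUP j\<in>{j. j \<noteq> i}. V j k + x j) \<le> e \<longleftrightarrow>
        (\<exists>v. V i k = ereal v \<and> (\<forall>j. j \<noteq> i \<longrightarrow> V j k + x j \<le> e + ereal v))" for k
      using entry_neq_pinf[of i k]
      by (cases "V i k") (auto simp: ereal_uminus_add_le_iff SUP_le_iff)
    then show ?thesis by blast
  qed
  finally show ?thesis .
qed

lemma le_opT_iff:
  "ereal c \<le> opT V x i \<longleftrightarrow>
    (\<forall>k v. V i k = ereal v \<longrightarrow> (\<exists>j. j \<noteq> i \<and> ereal (c + v) \<le> V j k + x j))"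
proof -
  have "ereal c \<le> - ereal v + (SUP j\<in>{j. j \<noteq> i}. V j k + x j) \<longleftrightarrow>
      (\<exists>j. j \<noteq> i \<and> ereal (c + v) \<le> V j k + x j)" for k v
    using finite_le_SUP_iff[of "{j. j \<noteq> i}" "ereal (c + v)"]
    by (simp add: ereal_le_uminus_add_iff bot_ereal_def)
  then have "(V i k \<noteq> -\<infinity> \<longrightarrow> ereal c \<le> - V i k + (SUP j\<in>{j. j \<noteq> i}. V j k + x j)) \<longleftrightarrow>
      (\<forall>v. V i k = ereal v \<longrightarrow> (\<exists>j. j \<noteq> i \<and> ereal (c + v) \<le> V j k + x j))" for k
    using entry_neq_pinf[of i k] by (cases "V i k") simp_all
  then show ?thesis
    unfolding opT_def le_INF_iff by blast
qed

lemma opT_neq_pinf: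
  assumes "rmax_vec x" shows "opT V x i \<noteq> \<infinity>"
proof -
  obtain k v where v: "V i k = ereal v" using row_nonempty finite_entry by blast
  define s where "s = (SUP j. V j k + x j)"
  have "V j k + x j \<noteq> \<infinity>" for j
    using entry_neq_pinf assms unfolding rmax_vec_def by simp
  then have "s \<noteq> \<infinity>"
    using finite_le_SUP_iff[of UNIV \<infinity> "\<lambda>j. V j k + x j"]
    unfolding s_def by (simp add: bot_ereal_def)
  moreover have "opT V x i \<le> s + ereal (- v)"
  proof -
    have "s + ereal (- v) + ereal v = s" by (cases s) auto
    moreover have "V j k + x j \<le> s" for j
      unfolding s_def by (rule SUP_upper) simp
    ultimately have "\<forall>j. j \<noteq> i \<longrightarrow> V j k + x j \<le> s + ereal (- v) + ereal v" by simp
    then show ?thesis unfolding opT_le_iff using v by blast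
  qed
  ultimately show ?thesis by auto
qed

lemma rmax_vec_opT: "rmax_vec x \<Longrightarrow> rmax_vec (opT V x)"
  using opT_neq_pinf unfolding rmax_vec_def by blast

lemma supp_vec_opT:
  assumes "rmax_vec x" shows "supp_vec (opT V x) = supp_map V (supp_vec x)"
proof -
  have sum_minf: "V j k + x j \<le> -\<infinity> \<longleftrightarrow> V j k = -\<infinity> \<or> j \<notin> supp_vec x" for j k
    using entry_neq_pinf[of j k] assms unfolding rmax_vec_def supp_vec_def
    by (cases "V j k"; cases "x j") auto
  have minf_bound: "(\<forall>j. j \<noteq> i \<longrightarrow> V j k + x j \<le> -\<infinity> + ereal v) \<longleftrightarrow>
      (\<forall>j. j \<noteq> i \<longrightarrow> V j k = -\<infinity> \<or> j \<notin> supp_vec x)" for i k v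
    using sum_minf by simp
  have "opT V x i = -\<infinity> \<longleftrightarrow> i \<notin> supp_map V (supp_vec x)" for i
  proof -
    have "opT V x i = -\<infinity> \<longleftrightarrow>
        (\<exists>k v. V i k = ereal v \<and> (\<forall>j. j \<noteq> i \<longrightarrow> V j k + x j \<le> -\<infinity> + ereal v))"
      unfolding opT_le_iff[symmetric] by simp
    also have "\<dots> \<longleftrightarrow> (\<exists>k. V i k \<noteq> -\<infinity> \<and> (\<forall>j. j \<noteq> i \<longrightarrow> V j k = -\<infinity> \<or> j \<notin> supp_vec x))"
      unfolding minf_bound using finite_entry_iff by blast
    also have "\<dots> \<longleftrightarrow> i \<notin> supp_map V (supp_vec x)"
      unfolding supp_map_def by blast
    finally show ?thesis .
  qed
  then show ?thesis unfolding supp_vec_def[of "opT V x"] by auto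
qed

lemma supp_vec_opT_funpow:
  assumes "rmax_vec x"
  shows "rmax_vec ((opT V ^^ m) x) \<and> supp_vec ((opT V ^^ m) x) = (supp_map V ^^ m) (supp_vec x)"
  by (induction m) (simp_all add: assms rmax_vec_opT supp_vec_opT)

lemma opT_part_subset_iff: "opT V ` part I \<subseteq> part I \<longleftrightarrow> supp_map V I = I"
proof
  define x :: "'n \<Rightarrow> ereal" where "x i = (if i \<in> I then 0 else -\<infinity>)" for i
  have x: "rmax_vec x" "supp_vec x = I"
    unfolding x_def rmax_vec_def supp_vec_def by auto
  assume "opT V ` part I \<subseteq> part I"
  moreover have "x \<in> part I" using x by (simp add: mem_part_iff)
  ultimately have "opT V x \<in> part I" by (rule subsetD[OF _ imageI])
  then have "supp_vec (opT V x) = I" by (simp add: mem_part_iff)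
  then show "supp_map V I = I" unfolding supp_vec_opT[OF x(1)] x(2) .
next
  assume fixed: "supp_map V I = I"
  show "opT V ` part I \<subseteq> part I"
  proof (rule image_subsetI)
    fix x assume "x \<in> part I"
    then have x: "rmax_vec x" "supp_vec x = I" by (simp_all add: mem_part_iff)
    have "supp_vec (opT V x) = I" unfolding supp_vec_opT[OF x(1)] x(2) fixed ..
    with rmax_vec_opT[OF x(1)] show "opT V x \<in> part I" by (simp add: mem_part_iff)
  qed
qed

lemma ex_invariant_part_iff:
  "(\<exists>I. I \<noteq> {} \<and> opT V ` part I \<subseteq> part I) \<longleftrightarrow> gfp (supp_map V) \<noteq> {}"
  unfolding opT_part_subset_iff gfp_neq_empty_iff[OF mono_supp_map] ..

lemma opT_funpow_zero_eq_minf_iff: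
  "(opT V ^^ CARD('n)) (\<lambda>_. 0) = (\<lambda>_. -\<infinity>) \<longleftrightarrow> gfp (supp_map V) = {}"
proof -
  have "rmax_vec (\<lambda>_::'n. 0::ereal)" "supp_vec (\<lambda>_::'n. 0::ereal) = UNIV"
    unfolding rmax_vec_def supp_vec_def by simp_all
  then have "supp_vec ((opT V ^^ CARD('n)) (\<lambda>_. 0)) = gfp (supp_map V)"
    using supp_vec_opT_funpow gfp_eq_funpow_card[OF mono_supp_map[of V]] by simp
  then show ?thesis unfolding supp_vec_eq_empty_iff[symmetric] by simp
qed

end

section \<open>Inner radius\<close>

definition entry_bound :: "('n::finite \<Rightarrow> 'p::finite \<Rightarrow> ereal) \<Rightarrow> real" where
  "entry_bound V = Max (range (\<lambda>(i, k). \<bar>real_of_ereal (V i k)\<bar>))"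

lemma abs_le_entry_bound: "V i k = ereal v \<Longrightarrow> \<bar>v\<bar> \<le> entry_bound V"
  unfolding entry_bound_def by (rule Max_ge) (auto intro!: image_eqI[of _ _ "(i, k)"])

lemma entry_bound_nonneg: "0 \<le> entry_bound V"
proof -
  have "\<bar>real_of_ereal (V i k)\<bar> \<le> entry_bound V" for i k
    unfolding entry_bound_def by (rule Max_ge) (auto intro!: image_eqI[of _ _ "(i, k)"])
  then show ?thesis by (meson abs_ge_zero order_trans)
qed

lemma decseq_level:
  fixes A :: "nat \<Rightarrow> 'a set"
  assumes "decseq A" "A 0 = UNIV" "A N = {}"
  obtains lev where "\<And>i. i \<in> A (lev i)" "\<And>i. i \<notin> A (Suc (lev i))"
proof
  define lev where "lev i = (LEAST m. i \<notin> A (Suc m))" for i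
  fix i
  have "i \<notin> A (Suc N)" using assms(1,3) by (auto simp: decseq_Suc_iff)
  then show "i \<notin> A (Suc (lev i))" unfolding lev_def by (rule LeastI)
  show "i \<in> A (lev i)"
  proof (cases "lev i")
    case (Suc q)
    then have "q < lev i" by simp
    then have "\<not> i \<notin> A (Suc q)" unfolding lev_def by (rule not_less_Least)
    then show ?thesis using Suc by simp
  qed (simp add: assms(2))
qed

lemma hilbert_d_le_imp_spread:
  assumes d: "hilbert_d (\<lambda>i. ereal (a i)) x \<le> ereal r"
  shows "\<exists>y. x = (\<lambda>i. ereal (y i)) \<and> (\<forall>i j. (a i - y i) - (a j - y j) \<le> r)"
proof -
  define D where "D = {ereal (l - m) | l m. \<forall>i. ereal m + x i \<le> ereal (a i) \<and> ereal (a i) \<le> ereal l + x i}"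
  have "D \<noteq> {}" using d unfolding hilbert_d_def D_def[symmetric] by (auto simp: top_ereal_def)
  then obtain l m where lm: "\<forall>i. ereal m + x i \<le> ereal (a i) \<and> ereal (a i) \<le> ereal l + x i"
    unfolding D_def by blast
  define y where "y i = real_of_ereal (x i)" for i
  have x: "x = (\<lambda>i. ereal (y i))"
  proof
    fix i show "x i = ereal (y i)" using lm[rule_format, of i] unfolding y_def by (cases "x i") auto
  qed
  have "ereal ((a i - y i) - (a j - y j)) \<le> Inf D" for i j
  proof (rule Inf_greatest)
    fix e assume "e \<in> D"
    then obtain l m where e: "e = ereal (l - m)"
      and "\<forall>i. ereal m + x i \<le> ereal (a i) \<and> ereal (a i) \<le> ereal l + x i"
      unfolding D_def by blast
    then have "a i \<le> l + y i" "m + y j \<le> a j" unfolding x by auto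
    then show "ereal ((a i - y i) - (a j - y j)) \<le> e" unfolding e by simp
  qed
  then have "ereal ((a i - y i) - (a j - y j)) \<le> ereal r" for i j
    using d unfolding hilbert_d_def D_def[symmetric] by (rule order_trans)
  then show ?thesis using x by auto
qed

lemma hilbert_d_le_of_spread:
  fixes a :: "'n::finite \<Rightarrow> real"
  assumes spread: "\<And>i j. (a i - y i) - (a j - y j) \<le> r"
  shows "hilbert_d (\<lambda>i. ereal (a i)) (\<lambda>i. ereal (y i)) \<le> ereal r"
proof -
  define l where "l = Max (range (\<lambda>i. a i - y i))"
  define m where "m = Min (range (\<lambda>i. a i - y i))"
  have "hilbert_d (\<lambda>i. ereal (a i)) (\<lambda>i. ereal (y i)) \<le> ereal (l - m)"
    unfolding hilbert_d_def
  proof (rule Inf_lower, intro CollectI exI conjI allI)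
    fix i
    have "m \<le> a i - y i" "a i - y i \<le> l" unfolding l_def m_def by auto
    then show "ereal m + ereal (y i) \<le> ereal (a i)" "ereal (a i) \<le> ereal l + ereal (y i)" by auto
  qed simp
  moreover have "l \<in> range (\<lambda>i. a i - y i)" "m \<in> range (\<lambda>i. a i - y i)"
    unfolding l_def m_def by (rule Max_in Min_in; simp)+
  then have "l - m \<le> r" using spread by auto
  ultimately show ?thesis by (meson ereal_less_eq(3) order_trans)
qed

lemma mem_hball_iff:
  fixes a :: "'n::finite \<Rightarrow> real"
  shows "x \<in> hball a r \<longleftrightarrow> (\<exists>y. x = (\<lambda>i. ereal (y i)) \<and> (\<forall>i j. (a i - y i) - (a j - y j) \<le> r))"
  unfolding hball_def rmax_vec_def
  by (auto dest: hilbert_d_le_imp_spread intro: hilbert_d_le_of_spread)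

lemma residual_le:
  assumes "V i k \<noteq> \<infinity>" "(INF j. ereal (y j) - V j k) \<noteq> \<infinity>"
  shows "V i k + (INF j. ereal (y j) - V j k) \<le> ereal (y i)"
proof (cases "V i k")
  case (real v)
  have "(INF j. ereal (y j) - V j k) \<le> ereal (y i - v)"
    by (rule INF_lower2[of i]) (simp_all add: real)
  then show ?thesis using real by (cases "INF j. ereal (y j) - V j k") auto
next
  case MInf
  then show ?thesis using assms(2) by (cases "INF j. ereal (y j) - V j k") auto
qed (use assms in simp)

lemma residual_neq_pinf: "V j k = ereal w \<Longrightarrow> (INF j. ereal (y j) - V j k) \<noteq> \<infinity>"
  using INF_lower2[of j UNIV "\<lambda>j. ereal (y j) - V j k" "ereal (y j - w)"] by auto

context maxplus_matrix
begin

lemma opT_lower_bound: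
  assumes "S \<subseteq> supp_map V S" "i \<in> S" "\<forall>j\<in>S. ereal m \<le> x j"
  shows "ereal (m - 2 * entry_bound V) \<le> opT V x i"
  unfolding le_opT_iff
proof (intro allI impI)
  fix k v assume v: "V i k = ereal v"
  have "i \<in> supp_map V S" "V i k \<noteq> -\<infinity>" using assms(1,2) v by auto
  then obtain j where j: "j \<in> S" "j \<noteq> i" "V j k \<noteq> -\<infinity>"
    unfolding supp_map_def by blast
  then obtain w where w: "V j k = ereal w" using finite_entry by blast
  have "ereal (m - 2 * entry_bound V + v) \<le> ereal (w + m)"
    using abs_le_entry_bound[of V, OF v] abs_le_entry_bound[of V, OF w] by simp
  also have "ereal (w + m) \<le> V j k + x j"
    using add_left_mono[OF assms(3)[rule_format, OF j(1)], of "ereal w"] w by simp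
  finally show "\<exists>j. j \<noteq> i \<and> ereal (m - 2 * entry_bound V + v) \<le> V j k + x j"
    using j(2) by blast
qed

lemma exists_subeigenvector:
  assumes "gfp (supp_map V) = {}" "0 \<le> r"
  shows "\<exists>z. \<forall>i. opT V (\<lambda>j. ereal (z j)) i \<le> ereal (z i - r)"
proof -
  define A where "A m = (supp_map V ^^ m) UNIV" for m
  have dec: "decseq A" unfolding A_def by (rule antimono_funpow[OF mono_supp_map])
  have "A CARD('n) = {}"
    using assms(1) unfolding A_def gfp_eq_funpow_card[OF mono_supp_map] .
  then obtain lev where lev: "\<And>i. i \<in> A (lev i)" "\<And>i. i \<notin> A (Suc (lev i))"
    using decseq_level[OF dec] unfolding A_def by auto
  have lev_less: "lev j < lev i" if j: "j \<notin> A (lev i)" for i j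
  proof (rule ccontr)
    assume "\<not> lev j < lev i"
    then have "A (lev j) \<subseteq> A (lev i)" by (intro decseqD[OF dec]) simp
    with lev(1)[of j] j show False by blast
  qed
  \<comment> \<open>\<open>lev i\<close> is the step at which \<open>i\<close> leaves the iterates; \<open>z\<close> climbs by \<open>R\<close> per level,
    enough to absorb \<open>r\<close> and two entries of \<open>V\<close>.\<close>
  define R where "R = r + 2 * entry_bound V"
  define z where "z i = R * real (lev i)" for i
  have "opT V (\<lambda>j. ereal (z j)) i \<le> ereal (z i - r)" for i
  proof -
    have "i \<notin> supp_map V (A (lev i))" using lev(2)[of i] unfolding A_def by simp
    then obtain k where k: "V i k \<noteq> -\<infinity>" "\<forall>j\<in>A (lev i). j = i \<or> V j k = -\<infinity>"
      unfolding supp_map_def by blast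
    then obtain v where v: "V i k = ereal v" using finite_entry by blast
    have "V j k + ereal (z j) \<le> ereal (z i - r) + ereal v" if "j \<noteq> i" for j
    proof (cases "V j k")
      case (real w)
      have "lev j < lev i" using k(2) real that by (intro lev_less) auto
      then have "R * real (lev j) \<le> R * (real (lev i) - 1)"
        using entry_bound_nonneg[of V] assms(2) unfolding R_def by (intro mult_left_mono) auto
      then show ?thesis
        using real abs_le_entry_bound[of V, OF real] abs_le_entry_bound[of V, OF v]
        unfolding z_def R_def by (simp add: algebra_simps)
    qed (use entry_neq_pinf in auto)
    then show ?thesis unfolding opT_le_iff using v by blast
  qed
  then show ?thesis by blast
qed

lemma opT_le_of_mem_col:
  assumes "y \<in> col V" "y i = ereal c" "\<And>j. j \<noteq> i \<Longrightarrow> y j \<le> ereal (b j)"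
  shows "opT V (\<lambda>j. ereal (- b j)) i \<le> ereal (- c)"
proof -
  obtain x where x: "rmax_vec x" "y = (\<lambda>i. SUP k. V i k + x k)"
    using assms(1) unfolding col_def by blast
  have "ereal c \<le> (SUP k. V i k + x k)" using assms(2) x(2) by simp
  then obtain k where k: "ereal c \<le> V i k + x k"
    using finite_le_SUP_iff[of UNIV "ereal c" "\<lambda>k. V i k + x k"] by (auto simp: bot_ereal_def)
  then obtain v \<xi> where v: "V i k = ereal v" and \<xi>: "x k = ereal \<xi>"
    using entry_neq_pinf[of i k] x(1) unfolding rmax_vec_def
    by (cases "V i k"; cases "x k") auto
  have "V j k + ereal (- b j) \<le> ereal (- c) + ereal v" if "j \<noteq> i" for j
  proof (cases "V j k")
    case (real w)
    have "V j k + x k \<le> y j" unfolding x(2) by (rule SUP_upper) simp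
    also have "\<dots> \<le> ereal (b j)" by (rule assms(3)[OF that])
    finally have "w + \<xi> \<le> b j" using real \<xi> by simp
    then show ?thesis using k v \<xi> real by simp
  qed (use entry_neq_pinf in auto)
  then show ?thesis unfolding opT_le_iff using v by blast
qed

lemma le_residual_if_opT_le:
  assumes "opT V (\<lambda>j. ereal (z j)) i \<le> ereal (z i - r)"
    and spread: "\<And>j. (z i + Y i) - (z j + Y j) \<le> r"
  shows "\<exists>k. ereal (Y i) \<le> V i k + (INF j. ereal (Y j) - V j k)"
proof -
  obtain k v where v: "V i k = ereal v"
    and bound: "\<forall>j. j \<noteq> i \<longrightarrow> V j k + ereal (z j) \<le> ereal (z i - r) + ereal v"
    using assms(1) unfolding opT_le_iff by blast
  have "ereal (Y i - v) \<le> (INF j. ereal (Y j) - V j k)"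
  proof (rule INF_greatest)
    fix j show "ereal (Y i - v) \<le> ereal (Y j) - V j k"
    proof (cases "j = i")
      case False
      show ?thesis
      proof (cases "V j k")
        case (real w)
        have "w + z j \<le> z i - r + v" using bound False real by auto
        with spread[of j] have "Y i - v \<le> Y j - w" by linarith
        then show ?thesis using real by simp
      qed (use entry_neq_pinf in auto)
    qed (simp add: v)
  qed
  then have "ereal (Y i) \<le> V i k + (INF j. ereal (Y j) - V j k)"
    using v by (cases "INF j. ereal (Y j) - V j k") auto
  then show ?thesis by blast
qed

lemma hball_subset_col:
  assumes col_nonempty: "\<And>k. \<exists>i. V i k \<noteq> -\<infinity>"
    and sub: "\<And>i. opT V (\<lambda>j. ereal (z j)) i \<le> ereal (z i - r)"
  shows "hball (\<lambda>i. - z i) r \<subseteq> col V"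
proof
  fix y assume "y \<in> hball (\<lambda>i. - z i) r"
  then obtain Y where y: "y = (\<lambda>i. ereal (Y i))"
    and spread: "\<And>i j. (- z i - Y i) - (- z j - Y j) \<le> r"
    unfolding mem_hball_iff by blast
  \<comment> \<open>the largest \<open>x\<close> with \<open>V x \<le> y\<close>\<close>
  define x where "x k = (INF j. ereal (Y j) - V j k)" for k
  have x_fin: "x k \<noteq> \<infinity>" for k
  proof -
    obtain j w where "V j k = ereal w" using col_nonempty finite_entry by blast
    then show ?thesis unfolding x_def by (rule residual_neq_pinf)
  qed
  have "ereal (Y i) \<le> (SUP k. V i k + x k)" for i
  proof -
    have "(z i + Y i) - (z j + Y j) \<le> r" for j using spread[of j i] by linarith
    then obtain k where "ereal (Y i) \<le> V i k + x k"
      using le_residual_if_opT_le[OF sub] unfolding x_def by blast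
    also have "\<dots> \<le> (SUP k. V i k + x k)" by (rule SUP_upper) simp
    finally show ?thesis .
  qed
  moreover have "(SUP k. V i k + x k) \<le> ereal (Y i)" for i
    unfolding x_def by (rule SUP_least, rule residual_le) (use entry_neq_pinf x_fin[unfolded x_def] in auto)
  ultimately have "y = (\<lambda>i. SUP k. V i k + x k)" unfolding y by (auto intro: antisym)
  moreover have "rmax_vec x" using x_fin unfolding rmax_vec_def by blast
  ultimately show "y \<in> col V" unfolding col_def by blast
qed

lemma radius_le_of_hball_subset_col:
  assumes "gfp (supp_map V) \<noteq> {}" "0 \<le> r" "hball a r \<subseteq> col V"
  shows "r \<le> 2 * entry_bound V"
proof -
  define S where "S = gfp (supp_map V)"
  have S_post: "S \<subseteq> supp_map V S"
    unfolding S_def using gfp_fixpoint[OF mono_supp_map[of V]] by simp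
  have "Max (a ` S) \<in> a ` S" using assms(1) unfolding S_def by (intro Max_in) auto
  then obtain i where i: "i \<in> S" "a i = Max (a ` S)" by auto
  have "ereal (- a i - 2 * entry_bound V) \<le> opT V (\<lambda>j. ereal (- a j)) i"
    using i by (intro opT_lower_bound[OF S_post i(1)]) auto
  also have "\<dots> \<le> ereal (- (a i + r))"
  proof (rule opT_le_of_mem_col)
    define y where "y j = a j + (if j = i then r else 0)" for j
    have "(\<lambda>j. ereal (y j)) \<in> hball a r"
      unfolding mem_hball_iff y_def using assms(2) by auto
    then show "(\<lambda>j. ereal (y j)) \<in> col V" using assms(3) by blast
    show "ereal (y i) = ereal (a i + r)" "\<And>j. j \<noteq> i \<Longrightarrow> ereal (y j) \<le> ereal (a j)"
      unfolding y_def by auto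
  qed
  finally show ?thesis by simp
qed

lemma inner_radius_eq_infinity_iff:
  assumes "\<And>k. \<exists>i. V i k \<noteq> -\<infinity>"
  shows "inner_radius V = \<infinity> \<longleftrightarrow> gfp (supp_map V) = {}"
proof
  assume infinite: "inner_radius V = \<infinity>"
  show "gfp (supp_map V) = {}"
  proof (rule ccontr)
    assume "gfp (supp_map V) \<noteq> {}"
    then have "inner_radius V \<le> ereal (2 * entry_bound V)"
      unfolding inner_radius_def by (auto intro!: Sup_least radius_le_of_hball_subset_col)
    with infinite show False by simp
  qed
next
  assume empty: "gfp (supp_map V) = {}"
  have radius_le: "ereal r \<le> inner_radius V" if r: "0 \<le> r" for r
  proof -
    obtain z where "\<And>i. opT V (\<lambda>j. ereal (z j)) i \<le> ereal (z i - r)"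
      using exists_subeigenvector[OF empty r] by blast
    then have "hball (\<lambda>i. - z i) r \<subseteq> col V" by (rule hball_subset_col[OF assms])
    then show ?thesis unfolding inner_radius_def using r by (intro Sup_upper) blast
  qed
  show "inner_radius V = \<infinity>"
  proof (rule ereal_top)
    fix B
    have "ereal B \<le> ereal (max B 0)" by simp
    also have "\<dots> \<le> inner_radius V" by (rule radius_le) simp
    finally show "ereal B \<le> inner_radius V" .
  qed
qed

end

section \<open>Eigenvectors\<close>

definition ln_ereal :: "real \<Rightarrow> ereal" where
  "ln_ereal t = (if 0 < t then ereal (ln t) else -\<infinity>)"

definition exp_ereal :: "ereal \<Rightarrow> real" where
  "exp_ereal v = (if v = -\<infinity> then 0 else exp (real_of_ereal v))"

lemma mono_ln_ereal: "mono ln_ereal"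
  unfolding ln_ereal_def by (rule monoI) auto

lemma ln_ereal_mult: "0 \<le> s \<Longrightarrow> 0 \<le> t \<Longrightarrow> ln_ereal (s * t) = ln_ereal s + ln_ereal t"
  unfolding ln_ereal_def by (auto simp: ln_mult zero_less_mult_iff)

lemma ln_exp_ereal: "v \<noteq> \<infinity> \<Longrightarrow> ln_ereal (exp_ereal v) = v"
  unfolding ln_ereal_def exp_ereal_def by (cases v) auto

lemma exp_ereal_nonneg: "0 \<le> exp_ereal v"
  unfolding exp_ereal_def by auto

lemma ln_ereal_le_cancel: "0 < s \<Longrightarrow> ln_ereal s \<le> ln_ereal t \<Longrightarrow> s \<le> t"
  unfolding ln_ereal_def by (auto split: if_splits)

lemma SUP_if_minf:
  "(SUP j. if P j then f j else (-\<infinity>::ereal)) = (SUP j\<in>{j. P j}. f j)"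
proof (rule antisym)
  show "(SUP j. if P j then f j else -\<infinity>) \<le> (SUP j\<in>{j. P j}. f j)"
    by (rule SUP_least) (auto intro: SUP_upper)
  show "(SUP j\<in>{j. P j}. f j) \<le> (SUP j. if P j then f j else -\<infinity>)"
  proof (rule SUP_least)
    fix j assume "j \<in> {j. P j}"
    then have "f j = (if P j then f j else -\<infinity>)" by simp
    also have "\<dots> \<le> (SUP j. if P j then f j else -\<infinity>)" by (rule SUP_upper) simp
    finally show "f j \<le> (SUP j. if P j then f j else -\<infinity>)" .
  qed
qed

lemma continuous_on_Max_finite:
  fixes f :: "'a \<Rightarrow> 'b::topological_space \<Rightarrow> real"
  assumes "finite A" "A \<noteq> {}" "\<And>a. a \<in> A \<Longrightarrow> continuous_on S (f a)"
  shows "continuous_on S (\<lambda>x. Max ((\<lambda>a. f a x) ` A))"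
  using assms
proof (induction A rule: finite_ne_induct)
  case (insert a F)
  have "continuous_on S (\<lambda>x. max (f a x) (Max ((\<lambda>a. f a x) ` F)))"
    using insert by (intro continuous_on_max) auto
  moreover have "Max ((\<lambda>a. f a x) ` insert a F) = max (f a x) (Max ((\<lambda>a. f a x) ` F))" for x
    using insert by (simp add: Max_insert)
  ultimately show ?case by simp
qed simp

lemma continuous_on_Min_finite:
  fixes f :: "'a \<Rightarrow> 'b::topological_space \<Rightarrow> real"
  assumes "finite A" "A \<noteq> {}" "\<And>a. a \<in> A \<Longrightarrow> continuous_on S (f a)"
  shows "continuous_on S (\<lambda>x. Min ((\<lambda>a. f a x) ` A))"
  using assms
proof (induction A rule: finite_ne_induct)
  case (insert a F)
  have "continuous_on S (\<lambda>x. min (f a x) (Min ((\<lambda>a. f a x) ` F)))"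
    using insert by (intro continuous_on_min) auto
  moreover have "Min ((\<lambda>a. f a x) ` insert a F) = min (f a x) (Min ((\<lambda>a. f a x) ` F))" for x
    using insert by (simp add: Min_insert)
  ultimately show ?case by simp
qed simp

(* exp \<circ> T \<circ> log on the nonnegative orthant. The term 0 at j = i replaces the exclusion
   of j = i: all terms are nonnegative, so it does not change the Max, and it keeps the Max
   well defined when i is the only index. *)
definition expT :: "('n::finite \<Rightarrow> 'p::finite \<Rightarrow> ereal) \<Rightarrow> real^'n \<Rightarrow> real^'n" where
  "expT V y = (\<chi> i. Min ((\<lambda>k. exp_ereal (- V i k) *
      Max (range (\<lambda>j. if j = i then 0 else exp_ereal (V j k) * y $ j))) ` {k. V i k \<noteq> -\<infinity>}))"

context maxplus_matrix
begin

lemma ln_ereal_expT_entry: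
  assumes y: "\<And>j. 0 \<le> y $ j" and "V i k \<noteq> -\<infinity>"
  shows "ln_ereal (exp_ereal (- V i k) *
      Max (range (\<lambda>j. if j = i then 0 else exp_ereal (V j k) * y $ j))) =
    - V i k + (SUP j\<in>{j. j \<noteq> i}. V j k + ln_ereal (y $ j))"
proof -
  define g where "g = (\<lambda>j. if j = i then 0 else exp_ereal (V j k) * y $ j)"
  have g: "0 \<le> g j" for j unfolding g_def using y exp_ereal_nonneg by (simp add: mult_nonneg_nonneg)
  have "ln_ereal (Max (range g)) = (SUP j. ln_ereal (g j))"
    by (simp add: mono_Max_commute[OF mono_ln_ereal] Max_Sup image_image)
  also have "\<dots> = (SUP j. if j \<noteq> i then V j k + ln_ereal (y $ j) else -\<infinity>)"
  proof (rule SUP_cong)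
    fix j
    show "ln_ereal (g j) = (if j \<noteq> i then V j k + ln_ereal (y $ j) else -\<infinity>)"
      unfolding g_def using y
      by (cases "j = i") (simp_all add: ln_ereal_mult exp_ereal_nonneg ln_exp_ereal entry_neq_pinf,
          simp add: ln_ereal_def)
  qed simp
  finally have "ln_ereal (Max (range g)) = (SUP j\<in>{j. j \<noteq> i}. V j k + ln_ereal (y $ j))"
    unfolding SUP_if_minf .
  moreover have "ln_ereal (exp_ereal (- V i k)) = - V i k"
    using assms(2) by (intro ln_exp_ereal) (cases "V i k", auto)
  moreover have "0 \<le> Max (range g)"
    using g[of i] by (rule order_trans) (rule Max_ge; simp)
  ultimately show ?thesis
    unfolding g_def[symmetric] by (simp add: ln_ereal_mult exp_ereal_nonneg)
qed

lemma opT_ln_ereal: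
  assumes "\<And>j. 0 \<le> y $ j"
  shows "opT V (\<lambda>j. ln_ereal (y $ j)) i = ln_ereal (expT V y $ i)"
proof -
  have K: "finite {k. V i k \<noteq> -\<infinity>}" "{k. V i k \<noteq> -\<infinity>} \<noteq> {}" using row_nonempty by auto
  have "ln_ereal (expT V y $ i) = (INF k\<in>{k. V i k \<noteq> -\<infinity>}. ln_ereal (exp_ereal (- V i k) *
      Max (range (\<lambda>j. if j = i then 0 else exp_ereal (V j k) * y $ j))))"
    unfolding expT_def using K by (simp add: mono_Min_commute[OF mono_ln_ereal] Min_Inf image_image)
  also have "\<dots> = opT V (\<lambda>j. ln_ereal (y $ j)) i"
    unfolding opT_def by (rule INF_cong[OF refl], rule ln_ereal_expT_entry[OF assms]) simp
  finally show ?thesis by simp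
qed

lemma continuous_on_expT: "continuous_on UNIV (expT V)"
  unfolding expT_def
proof (intro continuous_on_vec_lambda continuous_on_Min_finite)
  fix i k
  have "continuous_on UNIV (\<lambda>y. if j = i then 0 else exp_ereal (V j k) * y $ j)" for j
    by (cases "j = i") (auto intro!: continuous_intros)
  then have "continuous_on UNIV (\<lambda>y. Max ((\<lambda>j. if j = i then 0 else exp_ereal (V j k) * y $ j) ` UNIV))"
    by (intro continuous_on_Max_finite) auto
  then show "continuous_on UNIV (\<lambda>y. exp_ereal (- V i k) *
      Max (range (\<lambda>j. if j = i then 0 else exp_ereal (V j k) * y $ j)))"
    by (intro continuous_intros)
qed (use row_nonempty in auto)

lemma expT_nonneg:
  assumes "\<And>j. 0 \<le> y $ j" shows "0 \<le> expT V y $ i"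
proof -
  have "{k. V i k \<noteq> -\<infinity>} \<noteq> {}" using row_nonempty by auto
  moreover have "0 \<le> Max (range (\<lambda>j. if j = i then 0 else exp_ereal (V j k) * y $ j))" for k
    using Max_ge[of "range (\<lambda>j. if j = i then 0 else exp_ereal (V j k) * y $ j)" 0] by auto
  ultimately show ?thesis
    unfolding expT_def by (simp add: Min_ge_iff exp_ereal_nonneg)
qed

lemma expT_lower_bound:
  assumes "S \<subseteq> supp_map V S" "i \<in> S" "\<And>j. 0 \<le> y $ j" "0 < m" "\<forall>j\<in>S. m \<le> y $ j"
  shows "exp (- 2 * entry_bound V) * m \<le> expT V y $ i"
proof (rule ln_ereal_le_cancel)
  show "0 < exp (- 2 * entry_bound V) * m" using assms(4) by simp
  have "\<forall>j\<in>S. ereal (ln m) \<le> ln_ereal (y $ j)"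
    using assms(4,5) unfolding ln_ereal_def by auto
  then have "ereal (ln m - 2 * entry_bound V) \<le> opT V (\<lambda>j. ln_ereal (y $ j)) i"
    by (rule opT_lower_bound[OF assms(1,2)])
  then show "ln_ereal (exp (- 2 * entry_bound V) * m) \<le> ln_ereal (expT V y $ i)"
    using assms(4) unfolding opT_ln_ereal[OF assms(3)] by (simp add: ln_ereal_def ln_mult)
qed

lemma exists_expT_approx_fixpoint:
  assumes \<epsilon>: "0 < \<epsilon>"
  shows "\<exists>y\<in>cbox 0 1. expT V y + \<epsilon> *\<^sub>R 1 = (infnorm (expT V y) + \<epsilon>) *\<^sub>R y"
proof -
  define D :: "(real^'n) set" where "D = cbox 0 1"
  \<comment> \<open>adding \<open>\<epsilon>\<close> keeps the normalisation defined where \<open>expT V y = 0\<close>\<close>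
  define f where "f y = inverse (infnorm (expT V y) + \<epsilon>) *\<^sub>R (expT V y + \<epsilon> *\<^sub>R 1)" for y
  have den: "0 < infnorm (expT V y) + \<epsilon>" for y using infnorm_pos_le[of "expT V y"] \<epsilon> by linarith
  have "continuous_on D f"
    unfolding f_def using den continuous_on_subset[OF continuous_on_expT]
    by (intro continuous_intros) (auto simp: less_le)
  moreover have "f \<in> D \<rightarrow> D"
  proof
    fix y assume "y \<in> D"
    then have "0 \<le> expT V y $ i" for i by (intro expT_nonneg) (simp add: D_def mem_box_cart)
    moreover have "expT V y $ i \<le> infnorm (expT V y)" for i
      using component_le_infnorm_cart[of "expT V y" i] by simp
    moreover have "f y $ i = (expT V y $ i + \<epsilon>) / (infnorm (expT V y) + \<epsilon>)" for i
      unfolding f_def by (simp add: divide_inverse algebra_simps)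
    ultimately show "f y \<in> D"
      unfolding D_def mem_box_cart using den[of y] \<epsilon>
      by (auto simp: divide_le_eq_1_pos add_nonneg_nonneg intro: divide_nonneg_pos)
  qed
  moreover have "compact D" "convex D" unfolding D_def by auto
  moreover have "D \<noteq> {}" using D_def mem_box_cart[of 0] by fastforce
  ultimately obtain y where "y \<in> D" "f y = y" using brouwer by metis
  moreover from this have "expT V y + \<epsilon> *\<^sub>R 1 = (infnorm (expT V y) + \<epsilon>) *\<^sub>R y"
    unfolding f_def using den[of y] by (metis divideR_right less_irrefl)
  ultimately show ?thesis unfolding D_def by blast
qed

lemma approx_eigenvalue_lower_bound:
  assumes S: "S \<subseteq> supp_map V S" "S \<noteq> {}" and y: "y \<in> cbox 0 1" and \<epsilon>: "0 < \<epsilon>"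
    and eigen: "expT V y + \<epsilon> *\<^sub>R 1 = (infnorm (expT V y) + \<epsilon>) *\<^sub>R y"
  shows "exp (- 2 * entry_bound V) \<le> infnorm (expT V y) + \<epsilon>"
proof -
  have y_nonneg: "0 \<le> y $ j" for j using y unfolding mem_box_cart by simp
  have "Min ((\<lambda>j. y $ j) ` S) \<in> (\<lambda>j. y $ j) ` S" using S(2) by (intro Min_in) auto
  then obtain i where "i \<in> S" "y $ i = Min ((\<lambda>j. y $ j) ` S)" by auto
  then have i: "i \<in> S" "\<forall>j\<in>S. y $ i \<le> y $ j" by simp_all
  have eigen_i: "expT V y $ i + \<epsilon> = (infnorm (expT V y) + \<epsilon>) * y $ i"
    using arg_cong[OF eigen, of "\<lambda>v. v $ i"] by simp
  have "0 < y $ i"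
    using eigen_i expT_nonneg[OF y_nonneg, of i] infnorm_pos_le[of "expT V y"] \<epsilon>
    by (metis add_nonneg_pos zero_less_mult_pos)
  then have "exp (- 2 * entry_bound V) * y $ i \<le> expT V y $ i"
    using i by (intro expT_lower_bound[OF S(1)] y_nonneg) auto
  then have "exp (- 2 * entry_bound V) * y $ i \<le> (infnorm (expT V y) + \<epsilon>) * y $ i"
    using eigen_i \<epsilon> by linarith
  with \<open>0 < y $ i\<close> show ?thesis by simp
qed

lemma exists_expT_eigenvector:
  assumes S: "S \<subseteq> supp_map V S" "S \<noteq> {}"
  shows "\<exists>l\<in>cbox 0 1. expT V l = infnorm (expT V l) *\<^sub>R l \<and> 0 < infnorm (expT V l)"
proof -
  define N where "N y = infnorm (expT V y)" for y
  define e where "e n = inverse (real (Suc n))" for n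
  have "\<forall>n. \<exists>y\<in>cbox 0 1. expT V y + e n *\<^sub>R 1 = (N y + e n) *\<^sub>R y"
    unfolding N_def e_def using exists_expT_approx_fixpoint by simp
  then obtain Y where Y: "\<And>n. Y n \<in> cbox 0 1"
    and Y_eigen: "\<And>n. expT V (Y n) + e n *\<^sub>R 1 = (N (Y n) + e n) *\<^sub>R Y n"
    by metis
  have "seq_compact (cbox (0::real^'n) 1)" by (rule compact_imp_seq_compact[OF compact_cbox])
  then obtain l \<sigma> where l: "l \<in> cbox 0 1" and \<sigma>: "strict_mono \<sigma>" and "(Y \<circ> \<sigma>) \<longlonglongrightarrow> l"
    using seq_compactE[of "cbox 0 1" Y] Y by blast
  then have Y_lim: "(\<lambda>n. Y (\<sigma> n)) \<longlonglongrightarrow> l" by (simp add: o_def)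
  have e_lim: "(\<lambda>n. e (\<sigma> n)) \<longlonglongrightarrow> 0"
    using LIMSEQ_subseq_LIMSEQ[OF LIMSEQ_inverse_real_of_nat \<sigma>] unfolding e_def by (simp add: o_def)
  have "isCont (expT V) l"
    using continuous_on_expT by (simp add: continuous_on_eq_continuous_at)
  then have expT_lim: "(\<lambda>n. expT V (Y (\<sigma> n))) \<longlonglongrightarrow> expT V l"
    by (rule isCont_tendsto_compose[OF _ Y_lim])
  then have N_lim: "(\<lambda>n. N (Y (\<sigma> n))) \<longlonglongrightarrow> N l"
    unfolding N_def by (rule tendsto_infnorm)
  have "(\<lambda>n. expT V (Y (\<sigma> n)) + e (\<sigma> n) *\<^sub>R 1) \<longlonglongrightarrow> expT V l + 0 *\<^sub>R 1"
    by (intro tendsto_intros expT_lim e_lim)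
  moreover have "(\<lambda>n. expT V (Y (\<sigma> n)) + e (\<sigma> n) *\<^sub>R 1) \<longlonglongrightarrow> (N l + 0) *\<^sub>R l"
    unfolding Y_eigen by (intro tendsto_intros N_lim e_lim Y_lim)
  ultimately have "expT V l = N l *\<^sub>R l" using LIMSEQ_unique by fastforce
  moreover have "exp (- 2 * entry_bound V) \<le> N l + 0"
    using approx_eigenvalue_lower_bound[OF S Y _ Y_eigen[unfolded N_def]] e_def
    by (intro LIMSEQ_le_const[OF tendsto_add[OF N_lim e_lim]]) (auto simp: N_def)
  then have "0 < N l" using exp_gt_zero[of "- 2 * entry_bound V"] by linarith
  ultimately show ?thesis using l unfolding N_def by blast
qed

lemma exists_finite_eigenvalue:
  assumes S: "S \<subseteq> supp_map V S" "S \<noteq> {}"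
  shows "\<exists>c u. c \<noteq> \<infinity> \<and> c \<noteq> -\<infinity> \<and> rmax_vec u \<and> u \<noteq> (\<lambda>_. -\<infinity>) \<and> opT V u = (\<lambda>i. c + u i)"
proof -
  obtain l where l: "l \<in> cbox 0 1" and eigen: "expT V l = infnorm (expT V l) *\<^sub>R l"
    and N_pos: "0 < infnorm (expT V l)"
    using exists_expT_eigenvector[OF S] by blast
  have l_nonneg: "0 \<le> l $ j" for j using l unfolding mem_box_cart by simp
  have "expT V l \<noteq> 0" using N_pos unfolding infnorm_pos_lt .
  then obtain j where "l $ j \<noteq> 0" using eigen by (metis scaleR_zero_right vec_eq_iff zero_index)
  with l_nonneg have l_pos: "0 < l $ j" by (simp add: less_le)
  define u where "u j = ln_ereal (l $ j)" for j
  define c where "c = ereal (ln (infnorm (expT V l)))"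
  have "opT V u i = c + u i" for i
  proof -
    have "opT V u i = ln_ereal (infnorm (expT V l) * l $ i)"
      unfolding u_def opT_ln_ereal[OF l_nonneg] by (subst eigen) simp
    also have "\<dots> = c + u i"
      unfolding ln_ereal_mult[OF less_imp_le[OF N_pos] l_nonneg] c_def u_def
      using N_pos by (simp add: ln_ereal_def)
    finally show ?thesis .
  qed
  moreover have "rmax_vec u" unfolding rmax_vec_def u_def ln_ereal_def by simp
  moreover have "u j \<noteq> -\<infinity>" unfolding u_def ln_ereal_def using l_pos by simp
  ultimately show ?thesis unfolding c_def by (metis MInfty_neq_ereal(1) PInfty_neq_ereal(1))
qed

lemma supp_map_supp_vec_eigenvector:
  assumes "rmax_vec u" "c \<noteq> \<infinity>" "c \<noteq> -\<infinity>" "opT V u = (\<lambda>i. c + u i)"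
  shows "supp_map V (supp_vec u) = supp_vec u"
proof -
  have "supp_vec (\<lambda>i. c + u i) = supp_vec u"
    using assms(1-3) unfolding supp_vec_def rmax_vec_def by (cases c) auto
  then show ?thesis using supp_vec_opT[OF assms(1)] assms(4) by simp
qed

lemma rho_eq_minf_iff: "rho (opT V) = -\<infinity> \<longleftrightarrow> gfp (supp_map V) = {}"
proof
  assume rho: "rho (opT V) = -\<infinity>"
  show "gfp (supp_map V) = {}"
  proof (rule ccontr)
    assume "gfp (supp_map V) \<noteq> {}"
    moreover have "gfp (supp_map V) \<subseteq> supp_map V (gfp (supp_map V))"
      using gfp_fixpoint[OF mono_supp_map[of V]] by simp
    ultimately obtain c u where cu: "c \<noteq> \<infinity>" "c \<noteq> -\<infinity>" "rmax_vec u" "u \<noteq> (\<lambda>_. -\<infinity>)"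
      "opT V u = (\<lambda>i. c + u i)"
      using exists_finite_eigenvalue by blast
    then have "c \<le> rho (opT V)" unfolding rho_def by (intro Sup_upper) blast
    with rho cu(2) show False by simp
  qed
next
  assume empty: "gfp (supp_map V) = {}"
  have "c \<le> -\<infinity>" if "c \<noteq> \<infinity>" "rmax_vec u" "u \<noteq> (\<lambda>_. -\<infinity>)" "opT V u = (\<lambda>i. c + u i)" for c u
  proof (rule ccontr)
    assume "\<not> c \<le> -\<infinity>"
    then have "supp_map V (supp_vec u) = supp_vec u"
      using that by (intro supp_map_supp_vec_eigenvector) auto
    moreover have "supp_vec u \<noteq> {}" using that(3) supp_vec_eq_empty_iff by blast
    ultimately show False using empty gfp_neq_empty_iff[OF mono_supp_map] by blast
  qed
  then show "rho (opT V) = -\<infinity>"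
    unfolding rho_def by (intro antisym Sup_least) auto
qed

end

theorem corollary3p7:
  fixes V :: "'n::finite \<Rightarrow> 'p::finite \<Rightarrow> ereal"
  assumes "\<forall>i k. V i k \<noteq> \<infinity>"
    and "\<forall>i. \<exists>k. V i k \<noteq> -\<infinity>"
    and "\<forall>k. \<exists>i. V i k \<noteq> -\<infinity>"
  shows "(inner_radius V = \<infinity> \<longleftrightarrow> \<not> (\<exists>I. I \<noteq> {} \<and> opT V ` part I \<subseteq> part I))
       \<and> (\<not> (\<exists>I. I \<noteq> {} \<and> opT V ` part I \<subseteq> part I)
            \<longleftrightarrow> (opT V ^^ CARD('n)) (\<lambda>_. 0) = (\<lambda>_. -\<infinity>))
       \<and> ((opT V ^^ CARD('n)) (\<lambda>_. 0) = (\<lambda>_. -\<infinity>) \<longleftrightarrow> rho (opT V) = -\<infinity>)"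
proof -
  interpret maxplus_matrix V
    using assms(1,2) by unfold_locales auto
  show ?thesis
    unfolding inner_radius_eq_infinity_iff[OF assms(3)[rule_format]] ex_invariant_part_iff
      opT_funpow_zero_eq_minf_iff rho_eq_minf_iff
    by simp
qed

end
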